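(* Suppose that the penalties $\widehat C_1,\widehat C_2,\dots$ are such that, for some constant $\gamma>0$ and for all $k\ge 1$, $$\mathbb P\{\widehat C_k\le (L-\widehat L)(\hat f_k)\}\le \frac{\gamma}{n^2k^2}.$$ Then $$\mathbb E L(\hat f)-L^*\le \inf_{k\ge1}\bigl[L_k^*-L^*+\mathbb E\widehat C_k\bigr]+\frac{2\gamma}{n^2}.$$
   Context: Let $(X,Y)$ be a random pair taking values in $\mathbb R^d\times\{0,1\}$ with arbitrary distribution, and let $\mathcal D_n=((X_1,Y_1),\dots,(X_n,Y_n))$ be $n$ i.i.d. copies of $(X,Y)$, independent of $(X,Y)$. A classifier is a measurable map $f:\mathbb R^d\to\{0,1\}$. Its loss is $L(f)=\mathbb P\{f(X)\ne Y\}$ (for a classifier chosen from the data, $L(f)=\mathbb P\{f(X)\neq Y\mid\mathcal D_n\}$), its empirical loss is $\widehat L(f)=\frac1n\sum_{i=1}^n\mathbb I\{f(X_i)\ne Y_i\}$, and $(L-\widehat L)(f)=L(f)-\widehat L(f)$. Let $L^*=\inf_f L(f)$, the infimum over all classifiers. Let $\mathcal F_1,\mathcal F_2,\dots$ be fixed (non-random) classes of classifiers; $\hat f_k\in\mathcal F_k$ denotes a minimizer of $\widehat L$ over $\mathcal F_k$, and $L_k^*=\inf_{f\in\mathcal F_k}L(f)$. The penalties $\widehat C_k$, $k\ge1$, are nonnegative random variables that are measurable functions of $\mathcal D_n$. The penalized estimator is $\hat f=\hat f_{\hat k}$ where $\hat k\in\arg\min_{k\ge1}(\widehat L(\hat f_k)+\widehat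 C_k)$ (assumed to exist). All quantities are assumed measurable. *)

theory Defs
  imports "HOL-Probability.Probability"
begin

text \<open>Classifiers: measurable maps from the feature space to the label set
  (labels {0,1} encoded as bool).\<close>
definition classifiers :: "('x::topological_space \<Rightarrow> bool) set" where
  "classifiers = measurable borel (count_space UNIV)"

definition loss :: "'o measure \<Rightarrow> ('o \<Rightarrow> 'x) \<Rightarrow> ('o \<Rightarrow> bool) \<Rightarrow> ('x \<Rightarrow> bool) \<Rightarrow> real" where
  "loss M X Y f = measure M {\<omega> \<in> space M. f (X \<omega>) \<noteq> Y \<omega>}"

definition emp_loss :: "nat \<Rightarrow> (nat \<Rightarrow> 'o \<Rightarrow> 'x) \<Rightarrow> (nat \<Rightarrow> 'o \<Rightarrow> bool) \<Rightarrow> ('x \<Rightarrow> bool) \<Rightarrow> 'o \<Rightarrow> real" where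
  "emp_loss n Xs Ys f \<omega> = (\<Sum>i<n. if f (Xs i \<omega>) \<noteq> Ys i \<omega> then 1 else 0) / real n"

end

theory Submission
  imports Defs
begin

text \<open>Let \<open>U\<close> be the event that \<open>C\<^sub>j \<le> L(f\<^sub>j) - L\<^sub>n(f\<^sub>j)\<close> for some \<open>j \<ge> 1\<close>.
  Off \<open>U\<close>, writing \<open>j\<close> for the selected index, for every \<open>k\<close> and \<open>g \<in> F\<^sub>k\<close>
  \<open>L(f\<^sub>j) < L\<^sub>n(f\<^sub>j) + C\<^sub>j \<le> L\<^sub>n(f\<^sub>k) + C\<^sub>k \<le> L\<^sub>n(g) + C\<^sub>k\<close>, while on \<open>U\<close> the loss is at
  most 1. The union bound gives \<open>P(U) \<le> \<Sum>\<^sub>j \<gamma>/(n\<^sup>2j\<^sup>2) = \<gamma>\<pi>\<^sup>2/(6n\<^sup>2) \<le> 2\<gamma>/n\<^sup>2\<close>. Taking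
  expectations and using that \<open>L\<^sub>n(g)\<close> is an unbiased estimate of \<open>L(g)\<close> for a fixed \<open>g\<close>
  gives the bound.\<close>

lemma emp_loss_nonneg: "0 \<le> emp_loss n Xs Ys f \<omega>"
  unfolding emp_loss_def by (intro divide_nonneg_nonneg sum_nonneg) auto

lemma emp_loss_le_1: "emp_loss n Xs Ys f \<omega> \<le> 1"
proof (cases "n = 0")
  case False
  have "(\<Sum>i<n. if f (Xs i \<omega>) \<noteq> Ys i \<omega> then 1 else 0) \<le> (\<Sum>i<n. 1 :: real)"
    by (intro sum_mono) auto
  with False show ?thesis by (simp add: emp_loss_def)
qed (simp add: emp_loss_def)

lemma loss_nonneg: "0 \<le> loss M X Y f"
  by (simp add: loss_def)

lemma (in prob_space) loss_le_1: "loss M X Y f \<le> 1"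
  by (simp add: loss_def)

lemma error_set_measurable:
  assumes "g \<in> classifiers"
  shows "{p :: 'x::topological_space \<times> bool. g (fst p) \<noteq> snd p} \<in> sets (borel \<Otimes>\<^sub>M count_space UNIV)"
proof -
  have [measurable]: "g \<in> measurable borel (count_space UNIV)"
    using assms by (simp add: classifiers_def)
  have "{p \<in> space (borel \<Otimes>\<^sub>M count_space UNIV :: ('x \<times> bool) measure). g (fst p) \<noteq> snd p}
          \<in> sets (borel \<Otimes>\<^sub>M count_space UNIV)"
    by measurable
  then show ?thesis by (simp add: space_pair_measure)
qed

lemma loss_eq_measure_distr:
  assumes "X \<in> borel_measurable M" "Y \<in> measurable M (count_space UNIV)" "g \<in> classifiers"
  shows "loss M X Y g = measure (distr M (borel \<Otimes>\<^sub>M count_space UNIV) (\<lambda>\<omega>. (X \<omega>, Y \<omega>)))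
                                {p. g (fst p) \<noteq> snd p}"
proof -
  have "(\<lambda>\<omega>. (X \<omega>, Y \<omega>)) \<in> measurable M (borel \<Otimes>\<^sub>M count_space UNIV)"
    using assms(1,2) by (intro measurable_Pair) auto
  then show ?thesis
    using error_set_measurable[OF assms(3)] by (simp add: measure_distr loss_def vimage_def Int_def conj_commute)
qed

lemma (in finite_measure) measure_UN_le_inverse_squares:
  assumes sets: "\<And>k. k \<ge> 1 \<Longrightarrow> A k \<in> sets M"
    and bound: "\<And>k. k \<ge> 1 \<Longrightarrow> measure M (A k) \<le> a / real k ^ 2"
  shows "measure M (\<Union>k\<in>{1..}. A k) \<le> 2 * a"
proof -
  have "measure M (A 1) \<le> a"
    using bound[of 1] by simp
  then have a_nonneg: "a \<ge> 0"
    using measure_nonneg order_trans by metis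
  have sums: "(\<lambda>i. a * (1 / (real i + 1)\<^sup>2)) sums (a * (pi\<^sup>2 / 6))"
    using inverse_squares_sums by (intro sums_mult) (simp add: add.commute)
  have bound': "measure M (A (Suc i)) \<le> a * (1 / (real i + 1)\<^sup>2)" for i
    using bound[of "Suc i"] by (simp add: add.commute)
  have summable: "summable (\<lambda>i. measure M (A (Suc i)))"
    by (rule summable_comparison_test[OF _ sums_summable[OF sums]]) (use bound' in auto)
  have "(\<Union>k\<in>{1..}. A k) = (\<Union>i. A (Suc i))"
    by (auto simp: Suc_le_eq) (metis Suc_pred)
  then have "measure M (\<Union>k\<in>{1..}. A k) \<le> (\<Sum>i. measure M (A (Suc i)))"
    using sets summable by (auto intro!: finite_measure_subadditive_countably)
  also have "\<dots> \<le> a * (pi\<^sup>2 / 6)"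
    using suminf_le[OF bound' summable sums_summable[OF sums]] sums_unique[OF sums] by simp
  also have "\<dots> \<le> 2 * a"
  proof -
    have "pi * pi \<le> 3.15 * 3.15"
      using pi_approx(2) pi_gt_zero by (intro mult_mono) auto
    then have "pi\<^sup>2 / 6 \<le> 2"
      by (simp add: power2_eq_square)
    then show ?thesis
      using a_nonneg mult_left_mono by (metis mult.commute)
  qed
  finally show ?thesis .
qed

locale ident_distr_sample = prob_space M
  for M :: "'o measure" +
  fixes X :: "'o \<Rightarrow> 'x::topological_space" and Y :: "'o \<Rightarrow> bool"
    and Xs :: "nat \<Rightarrow> 'o \<Rightarrow> 'x" and Ys :: "nat \<Rightarrow> 'o \<Rightarrow> bool"
    and n :: nat
  assumes n_pos: "n > 0"
    and X_meas: "X \<in> borel_measurable M" and Y_meas: "Y \<in> measurable M (count_space UNIV)"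
    and Xs_meas: "\<And>i. i < n \<Longrightarrow> Xs i \<in> borel_measurable M"
    and Ys_meas: "\<And>i. i < n \<Longrightarrow> Ys i \<in> measurable M (count_space UNIV)"
    and ident: "\<And>i. i < n \<Longrightarrow>
                  distr M (borel \<Otimes>\<^sub>M count_space UNIV) (\<lambda>\<omega>. (Xs i \<omega>, Ys i \<omega>))
                  = distr M (borel \<Otimes>\<^sub>M count_space UNIV) (\<lambda>\<omega>. (X \<omega>, Y \<omega>))"
begin

lemma has_bochner_integral_emp_loss:
  assumes g: "g \<in> classifiers"
  shows "has_bochner_integral M (emp_loss n Xs Ys g) (loss M X Y g)"
proof -
  define A where "A i = {\<omega> \<in> space M. g (Xs i \<omega>) \<noteq> Ys i \<omega>}" for i
  have A_loss: "measure M (A i) = loss M X Y g" if "i < n" for i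
    using loss_eq_measure_distr[OF Xs_meas Ys_meas g, OF that that]
      loss_eq_measure_distr[OF X_meas Y_meas g] ident[OF that]
    by (simp add: loss_def A_def)
  have A_sets: "A i \<in> sets M" if "i < n" for i
  proof -
    have "(\<lambda>\<omega>. (Xs i \<omega>, Ys i \<omega>)) \<in> measurable M (borel \<Otimes>\<^sub>M count_space UNIV)"
      using Xs_meas[OF that] Ys_meas[OF that] by (intro measurable_Pair) auto
    from measurable_sets[OF this error_set_measurable[OF g]] show ?thesis
      by (simp add: A_def vimage_def Int_def conj_commute)
  qed
  have "has_bochner_integral M (\<lambda>\<omega>. (\<Sum>i<n. indicator (A i) \<omega>) / real n)
          ((\<Sum>i<n. measure M (A i)) / real n)"
    using A_sets by (intro has_bochner_integral_divide_zero has_bochner_integral_sum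
        has_bochner_integral_real_indicator) (auto simp: emeasure_eq_measure)
  moreover have "(\<Sum>i<n. measure M (A i)) / real n = loss M X Y g"
    using A_loss n_pos by simp
  moreover have "emp_loss n Xs Ys g \<omega> = (\<Sum>i<n. indicator (A i) \<omega>) / real n" if "\<omega> \<in> space M" for \<omega>
    using that unfolding emp_loss_def A_def by (intro arg_cong2[where f="(/)"] sum.cong) auto
  ultimately show ?thesis
    by (simp cong: has_bochner_integral_cong)
qed

end

lemma ereal_le_plus_nn_integral:
  assumes "f \<in> borel_measurable M" "\<And>x. x \<in> space M \<Longrightarrow> 0 \<le> f x"
    and "integrable M f \<Longrightarrow> a \<le> b + integral\<^sup>L M f"
  shows "ereal a \<le> ereal b + enn2ereal (\<integral>\<^sup>+x. ennreal (f x) \<partial>M)"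
proof (cases "(\<integral>\<^sup>+x. ennreal (f x) \<partial>M) = \<infinity>")
  case False
  then obtain r where r: "(\<integral>\<^sup>+x. ennreal (f x) \<partial>M) = ennreal r" "0 \<le> r"
    by (cases "\<integral>\<^sup>+x. ennreal (f x) \<partial>M") auto
  then have "integrable M f \<and> integral\<^sup>L M f = r"
    using nn_integral_eq_integrable[of f M r] assms(1,2) by auto
  then show ?thesis
    using assms(3) r by simp
qed simp

locale penalized_erm = ident_distr_sample M X Y Xs Ys n
  for M :: "'o measure" and X :: "'o \<Rightarrow> 'x::topological_space" and Y Xs Ys n +
  fixes F :: "nat \<Rightarrow> ('x \<Rightarrow> bool) set"
    and fhat :: "nat \<Rightarrow> 'o \<Rightarrow> 'x \<Rightarrow> bool"
    and C :: "nat \<Rightarrow> 'o \<Rightarrow> real"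
    and khat :: "'o \<Rightarrow> nat"
  assumes F_cls: "\<And>k. k \<ge> 1 \<Longrightarrow> F k \<subseteq> classifiers"
    and fhat_in: "\<And>k \<omega>. k \<ge> 1 \<Longrightarrow> \<omega> \<in> space M \<Longrightarrow> fhat k \<omega> \<in> F k"
    and fhat_min: "\<And>k \<omega> g. k \<ge> 1 \<Longrightarrow> \<omega> \<in> space M \<Longrightarrow> g \<in> F k \<Longrightarrow>
                     emp_loss n Xs Ys (fhat k \<omega>) \<omega> \<le> emp_loss n Xs Ys g \<omega>"
    and C_nonneg: "\<And>k \<omega>. k \<ge> 1 \<Longrightarrow> \<omega> \<in> space M \<Longrightarrow> C k \<omega> \<ge> 0"
    and C_meas: "\<And>k. k \<ge> 1 \<Longrightarrow> C k \<in> borel_measurable M"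
    and khat_ge: "\<And>\<omega>. \<omega> \<in> space M \<Longrightarrow> khat \<omega> \<ge> 1"
    and khat_min: "\<And>k \<omega>. k \<ge> 1 \<Longrightarrow> \<omega> \<in> space M \<Longrightarrow>
                     emp_loss n Xs Ys (fhat (khat \<omega>) \<omega>) \<omega> + C (khat \<omega>) \<omega>
                     \<le> emp_loss n Xs Ys (fhat k \<omega>) \<omega> + C k \<omega>"
    and L_meas: "\<And>k. k \<ge> 1 \<Longrightarrow> (\<lambda>\<omega>. loss M X Y (fhat k \<omega>)) \<in> borel_measurable M"
    and Lhat_meas: "\<And>k. k \<ge> 1 \<Longrightarrow> (\<lambda>\<omega>. emp_loss n Xs Ys (fhat k \<omega>) \<omega>) \<in> borel_measurable M"
    and Lfinal_meas: "(\<lambda>\<omega>. loss M X Y (fhat (khat \<omega>) \<omega>)) \<in> borel_measurable M"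
begin

definition underpenalized :: "nat \<Rightarrow> 'o set" where
  "underpenalized k =
     {\<omega> \<in> space M. C k \<omega> \<le> loss M X Y (fhat k \<omega>) - emp_loss n Xs Ys (fhat k \<omega>) \<omega>}"

lemma sets_underpenalized: "k \<ge> 1 \<Longrightarrow> underpenalized k \<in> sets M"
  unfolding underpenalized_def
  using C_meas L_meas Lhat_meas by (intro borel_measurable_le borel_measurable_diff)

lemma loss_selected_le:
  assumes k: "k \<ge> 1" and \<omega>: "\<omega> \<in> space M"
  shows "loss M X Y (fhat (khat \<omega>) \<omega>)
           \<le> indicator (\<Union>j\<in>{1..}. underpenalized j) \<omega> + emp_loss n Xs Ys (fhat k \<omega>) \<omega> + C k \<omega>"
proof (cases "\<omega> \<in> (\<Union>j\<in>{1..}. underpenalized j)")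
  case True
  then show ?thesis
    using loss_le_1[of X Y "fhat (khat \<omega>) \<omega>"] emp_loss_nonneg[of n Xs Ys "fhat k \<omega>" \<omega>] C_nonneg[OF k \<omega>]
    by simp
next
  case False
  then have "\<omega> \<notin> underpenalized (khat \<omega>)"
    using khat_ge[OF \<omega>] by auto
  then have "loss M X Y (fhat (khat \<omega>) \<omega>) < emp_loss n Xs Ys (fhat (khat \<omega>) \<omega>) \<omega> + C (khat \<omega>) \<omega>"
    using \<omega> by (auto simp: underpenalized_def)
  then show ?thesis
    using False khat_min[OF k \<omega>] by simp
qed

lemma integrable_emp_loss_erm:
  "k \<ge> 1 \<Longrightarrow> integrable M (\<lambda>\<omega>. emp_loss n Xs Ys (fhat k \<omega>) \<omega>)"
  using Lhat_meas
  by (intro integrable_const_bound[where B=1]) (simp_all add: emp_loss_nonneg emp_loss_le_1)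

lemma integrable_loss_selected: "integrable M (\<lambda>\<omega>. loss M X Y (fhat (khat \<omega>) \<omega>))"
  using Lfinal_meas
  by (intro integrable_const_bound[where B=1]) (simp_all add: loss_nonneg loss_le_1)

lemma integral_emp_loss_erm_le:
  assumes k: "k \<ge> 1"
  shows "(\<integral>\<omega>. emp_loss n Xs Ys (fhat k \<omega>) \<omega> \<partial>M) \<le> (INF f\<in>F k. loss M X Y f)"
proof (rule cInf_greatest)
  show "(\<lambda>f. loss M X Y f) ` F k \<noteq> {}"
    using fhat_in[OF k] not_empty by blast
next
  fix l assume "l \<in> (\<lambda>f. loss M X Y f) ` F k"
  then obtain g where g: "g \<in> F k" and l: "l = loss M X Y g"
    by auto
  have "has_bochner_integral M (emp_loss n Xs Ys g) l"
    using has_bochner_integral_emp_loss F_cls[OF k] g l by auto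
  then show "(\<integral>\<omega>. emp_loss n Xs Ys (fhat k \<omega>) \<omega> \<partial>M) \<le> l"
    using integrable_emp_loss_erm[OF k] fhat_min[OF k _ g]
    by (auto simp: has_bochner_integral_iff intro!: integral_mono)
qed

lemma integral_loss_selected_le:
  assumes tail: "\<And>k. k \<ge> 1 \<Longrightarrow> measure M (underpenalized k) \<le> \<gamma> / (real n ^ 2 * real k ^ 2)"
    and k: "k \<ge> 1" and C_int: "integrable M (C k)"
  shows "(\<integral>\<omega>. loss M X Y (fhat (khat \<omega>) \<omega>) \<partial>M)
           \<le> 2 * \<gamma> / real n ^ 2 + (INF f\<in>F k. loss M X Y f) + integral\<^sup>L M (C k)"
proof -
  define U where "U = (\<Union>j\<in>{1..}. underpenalized j)"
  have U_sets: "U \<in> sets M"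
    using sets_underpenalized by (auto simp: U_def)
  have U_int: "integrable M (indicator U :: 'o \<Rightarrow> real)"
    using U_sets by (intro integrable_real_indicator) (auto simp: emeasure_eq_measure)
  have "measure M U \<le> 2 * (\<gamma> / real n ^ 2)"
    unfolding U_def using sets_underpenalized tail
    by (intro measure_UN_le_inverse_squares) (auto simp: divide_divide_eq_left)
  moreover have "(\<integral>\<omega>. loss M X Y (fhat (khat \<omega>) \<omega>) \<partial>M)
      \<le> (\<integral>\<omega>. indicator U \<omega> + emp_loss n Xs Ys (fhat k \<omega>) \<omega> + C k \<omega> \<partial>M)"
    using loss_selected_le[OF k] integrable_loss_selected U_int integrable_emp_loss_erm[OF k] C_int
    by (intro integral_mono Bochner_Integration.integrable_add) (auto simp: U_def)
  moreover have "(\<integral>\<omega>. indicator U \<omega> + emp_loss n Xs Ys (fhat k \<omega>) \<omega> + C k \<omega> \<partial>M)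
      = measure M U + (\<integral>\<omega>. emp_loss n Xs Ys (fhat k \<omega>) \<omega> \<partial>M) + integral\<^sup>L M (C k)"
    using U_int integrable_emp_loss_erm[OF k] C_int U_sets by simp
  ultimately show ?thesis
    using integral_emp_loss_erm_le[OF k] by simp
qed

end

theorem lemma2p1:
  fixes M :: "'o measure"
    and X :: "'o \<Rightarrow> real ^ 'd" and Y :: "'o \<Rightarrow> bool"
    and Xs :: "nat \<Rightarrow> 'o \<Rightarrow> real ^ 'd" and Ys :: "nat \<Rightarrow> 'o \<Rightarrow> bool"
    and n :: nat
    and F :: "nat \<Rightarrow> (real ^ 'd \<Rightarrow> bool) set"
    and fhat :: "nat \<Rightarrow> 'o \<Rightarrow> (real ^ 'd \<Rightarrow> bool)"
    and C :: "nat \<Rightarrow> 'o \<Rightarrow> real"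
    and khat :: "'o \<Rightarrow> nat"
    and \<gamma> :: real
  assumes prob: "prob_space M"
    and n_pos: "n > 0"
    (* random pair and sample: measurable, i.i.d., sample independent of (X,Y) *)
    and X_meas: "X \<in> borel_measurable M" and Y_meas: "Y \<in> measurable M (count_space UNIV)"
    and Xs_meas: "\<And>i. i < n \<Longrightarrow> Xs i \<in> borel_measurable M"
    and Ys_meas: "\<And>i. i < n \<Longrightarrow> Ys i \<in> measurable M (count_space UNIV)"
    and indep: "prob_space.indep_vars M (\<lambda>_. borel \<Otimes>\<^sub>M count_space UNIV)
                  (\<lambda>i \<omega>. if i < n then (Xs i \<omega>, Ys i \<omega>) else (X \<omega>, Y \<omega>)) {0..n}"
    and ident: "\<And>i. i < n \<Longrightarrow>
                  distr M (borel \<Otimes>\<^sub>M count_space UNIV) (\<lambda>\<omega>. (Xs i \<omega>, Ys i \<omega>))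
                  = distr M (borel \<Otimes>\<^sub>M count_space UNIV) (\<lambda>\<omega>. (X \<omega>, Y \<omega>))"
    (* fixed classes of classifiers *)
    and F_cls: "\<And>k. k \<ge> 1 \<Longrightarrow> F k \<subseteq> classifiers"
    (* empirical risk minimizers, functions of the data *)
    and fhat_in: "\<And>k \<omega>. k \<ge> 1 \<Longrightarrow> \<omega> \<in> space M \<Longrightarrow> fhat k \<omega> \<in> F k"
    and fhat_min: "\<And>k \<omega> g. k \<ge> 1 \<Longrightarrow> \<omega> \<in> space M \<Longrightarrow> g \<in> F k \<Longrightarrow>
                     emp_loss n Xs Ys (fhat k \<omega>) \<omega> \<le> emp_loss n Xs Ys g \<omega>"
    and fhat_data: "\<And>k \<omega> \<omega>'. k \<ge> 1 \<Longrightarrow> \<omega> \<in> space M \<Longrightarrow> \<omega>' \<in> space M \<Longrightarrow>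
                     (\<forall>i<n. Xs i \<omega> = Xs i \<omega>' \<and> Ys i \<omega> = Ys i \<omega>') \<Longrightarrow> fhat k \<omega> = fhat k \<omega>'"
    (* penalties: nonnegative measurable functions of the data *)
    and C_nonneg: "\<And>k \<omega>. k \<ge> 1 \<Longrightarrow> \<omega> \<in> space M \<Longrightarrow> C k \<omega> \<ge> 0"
    and C_meas: "\<And>k. k \<ge> 1 \<Longrightarrow> C k \<in> borel_measurable M"
    and C_data: "\<And>k \<omega> \<omega>'. k \<ge> 1 \<Longrightarrow> \<omega> \<in> space M \<Longrightarrow> \<omega>' \<in> space M \<Longrightarrow>
                     (\<forall>i<n. Xs i \<omega> = Xs i \<omega>' \<and> Ys i \<omega> = Ys i \<omega>') \<Longrightarrow> C k \<omega> = C k \<omega>'"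
    (* penalized model selection *)
    and khat_ge: "\<And>\<omega>. \<omega> \<in> space M \<Longrightarrow> khat \<omega> \<ge> 1"
    and khat_min: "\<And>k \<omega>. k \<ge> 1 \<Longrightarrow> \<omega> \<in> space M \<Longrightarrow>
                     emp_loss n Xs Ys (fhat (khat \<omega>) \<omega>) \<omega> + C (khat \<omega>) \<omega>
                     \<le> emp_loss n Xs Ys (fhat k \<omega>) \<omega> + C k \<omega>"
    (* all quantities measurable *)
    and khat_meas: "khat \<in> measurable M (count_space UNIV)"
    and L_meas: "\<And>k. k \<ge> 1 \<Longrightarrow> (\<lambda>\<omega>. loss M X Y (fhat k \<omega>)) \<in> borel_measurable M"
    and Lhat_meas: "\<And>k. k \<ge> 1 \<Longrightarrow> (\<lambda>\<omega>. emp_loss n Xs Ys (fhat k \<omega>) \<omega>) \<in> borel_measurable M"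
    and Lfinal_meas: "(\<lambda>\<omega>. loss M X Y (fhat (khat \<omega>) \<omega>)) \<in> borel_measurable M"
    (* hypothesis on the penalties *)
    and gamma_pos: "\<gamma> > 0"
    and tail: "\<And>k. k \<ge> 1 \<Longrightarrow>
                 measure M {\<omega> \<in> space M. C k \<omega> \<le> loss M X Y (fhat k \<omega>) - emp_loss n Xs Ys (fhat k \<omega>) \<omega>}
                 \<le> \<gamma> / (real n ^ 2 * real k ^ 2)"
  shows "ereal ((\<integral>\<omega>. loss M X Y (fhat (khat \<omega>) \<omega>) \<partial>M) - (INF f\<in>classifiers. loss M X Y f))
         \<le> (INF k\<in>{1..}. ereal ((INF f\<in>F k. loss M X Y f) - (INF f\<in>classifiers. loss M X Y f))
                            + enn2ereal (\<integral>\<^sup>+\<omega>. ennreal (C k \<omega>) \<partial>M))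
           + ereal (2 * \<gamma> / real n ^ 2)"
proof -
  interpret penalized_erm M X Y Xs Ys n F fhat C khat
    by (intro penalized_erm.intro ident_distr_sample.intro
        ident_distr_sample_axioms.intro penalized_erm_axioms.intro)
      (fact prob n_pos X_meas Y_meas Xs_meas Ys_meas ident F_cls fhat_in fhat_min C_nonneg C_meas
        khat_ge khat_min L_meas Lhat_meas Lfinal_meas)+
  define Ls where "Ls = (INF f\<in>classifiers. loss M X Y f)"
  define c where "c = 2 * \<gamma> / real n ^ 2"
  have "ereal ((\<integral>\<omega>. loss M X Y (fhat (khat \<omega>) \<omega>) \<partial>M) - Ls - c)
          \<le> ereal ((INF f\<in>F k. loss M X Y f) - Ls) + enn2ereal (\<integral>\<^sup>+\<omega>. ennreal (C k \<omega>) \<partial>M)"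
    if k: "k \<ge> 1" for k
    using integral_loss_selected_le[OF tail[folded underpenalized_def] k] C_meas[OF k] C_nonneg[OF k]
    by (intro ereal_le_plus_nn_integral) (auto simp: c_def)
  then have "ereal ((\<integral>\<omega>. loss M X Y (fhat (khat \<omega>) \<omega>) \<partial>M) - Ls - c)
      \<le> (INF k\<in>{1..}. ereal ((INF f\<in>F k. loss M X Y f) - Ls) + enn2ereal (\<integral>\<^sup>+\<omega>. ennreal (C k \<omega>) \<partial>M))"
    by (intro INF_greatest) auto
  from add_right_mono[OF this, of "ereal c"] show ?thesis
    by (simp add: Ls_def c_def)
qed

end
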